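(* Consider the Data Collection process with parameter $\beta$ on a connected weighted graph $G=(V,E,w)$ with sink $u_s$ and relative rate vector $\bm{J}$, and suppose the chain $\{Q^\beta_t\}$ is ergodic with stationary distribution $\pi$ under which $\mathbb{E}_\pi[Q(u)]<\infty$ for every $u\ne u_s$. Let $\bm{\eta}\in\mathbb{R}^V$ be the vector of steady-state queue occupancy probabilities ($\bm{\eta}_u=\pi(Q(u)>0)$ for $u\ne u_s$, $\bm{\eta}_{u_s}=0$). Then $\bm{\eta}^T(I-\mathcal{P})=\beta\bm{J}^T$; equivalently, the vector $\bm{x}$ with $\bm{x}_u=\bm{\eta}_u/d_u$ satisfies $\bm{x}^TL=\beta\bm{J}^T$.
   Context: Graph notation: for $u\in V$, the generalized degree is $d_u=\sum_{v:(u,v)\in E}w_{uv}$; $A$ is the weighted adjacency matrix ($A_{uv}=w_{uv}$ if $(u,v)\in E$, else $0$), $D=\mathrm{diag}(d_u)$, $L=D-A$, and $\mathcal{P}=D^{-1}A$ is the transition matrix of the natural random walk, $\mathcal{P}(u,v)=w_{uv}/d_u$. Data Collection process: fix a sink $u_s\in V$ and a set of sources $V_s\subseteq V\setminus\{u_s\}$. The relative rate vector $\bm{J}\in\mathbb{R}^{V}$ satisfies $\bm{J}_v>0$ for $v\in V_s$, $\bm{J}_v=0$ for $v\in V\setminus(V_s\cup\{u_s\})$, and $\bm{J}_{u_s}=-\sum_{v\ne u_s}\bm{J}_v$. Given $\beta>0$ with $\beta\bm{J}_v\le1$ for all $v\in V_s$, the Data Collection process with parameter $\beta$ is the discrete-time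 Markov chain $\{Q^\beta_t\}_{t\ge0}$ on $(\mathbb{N}\cup\{0\})^{V\setminus\{u_s\}}$, where $Q^\beta_t(v)$ is the number of packets in the queue of node $v$ at time $t$, evolving as follows at each step: each $v\in V_s$ independently generates a new packet with probability $\beta\bm{J}_v$ (Bernoulli) and places it in its queue; each node $u\ne u_s$ with nonempty queue picks one packet from its queue and independently picks a neighbor $v$ with probability $w_{uv}/d_u$, and transmits the packet to $v$: the packet is removed from $u$'s queue and added to $v$'s queue if $v\ne u_s$, or removed from the system if $v=u_s$. The sink has no queue. *)

theory Defs
  imports "HOL-Probability.Probability"
begin

definition gdeg :: "('v::finite \<Rightarrow> 'v \<Rightarrow> real) \<Rightarrow> 'v \<Rightarrow> real" where
  "gdeg w u = (\<Sum>v\<in>UNIV. w u v)"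

definition edges :: "('v \<Rightarrow> 'v \<Rightarrow> real) \<Rightarrow> ('v \<times> 'v) set" where
  "edges w = {(u,v). w u v > 0}"

definition weighted_graph :: "('v \<Rightarrow> 'v \<Rightarrow> real) \<Rightarrow> bool" where
  "weighted_graph w \<longleftrightarrow> (\<forall>u v. w u v = w v u) \<and> (\<forall>u v. w u v \<ge> 0)"

definition connected_graph :: "('v \<Rightarrow> 'v \<Rightarrow> real) \<Rightarrow> bool" where
  "connected_graph w \<longleftrightarrow> (\<forall>u v. (u,v) \<in> (edges w)\<^sup>*)"

definition trans_mat :: "('v::finite \<Rightarrow> 'v \<Rightarrow> real) \<Rightarrow> 'v \<Rightarrow> 'v \<Rightarrow> real" where
  "trans_mat w u v = w u v / gdeg w u"

definition laplacian :: "('v::finite \<Rightarrow> 'v \<Rightarrow> real) \<Rightarrow> 'v \<Rightarrow> 'v \<Rightarrow> real" where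
  "laplacian w u v = (if u = v then gdeg w u else 0) - w u v"

definition nbr_pmf :: "('v::finite \<Rightarrow> 'v \<Rightarrow> real) \<Rightarrow> 'v \<Rightarrow> 'v pmf" where
  "nbr_pmf w u = embed_pmf (\<lambda>v. w u v / gdeg w u)"

definition rate_vector :: "'v::finite \<Rightarrow> 'v set \<Rightarrow> ('v \<Rightarrow> real) \<Rightarrow> bool" where
  "rate_vector us Vs J \<longleftrightarrow> us \<notin> Vs \<and> (\<forall>v\<in>Vs. J v > 0)
     \<and> (\<forall>v. v \<notin> Vs \<and> v \<noteq> us \<longrightarrow> J v = 0)
     \<and> J us = - (\<Sum>v\<in>UNIV - {us}. J v)"

(* States: queue lengths Q :: 'v \<Rightarrow> nat; the sink coordinate is always 0 (no queue). *)
definition dc_states :: "'v \<Rightarrow> ('v \<Rightarrow> nat) set" where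
  "dc_states us = {Q. Q us = 0}"

(* One step: decisions to transmit are made on the current state Q_t; the newly generated
   packets A and the received packets are added to obtain Q_{t+1}. *)
definition dc_next :: "'v::finite \<Rightarrow> ('v \<Rightarrow> nat) \<Rightarrow> ('v \<Rightarrow> bool) \<Rightarrow> ('v \<Rightarrow> 'v) \<Rightarrow> 'v \<Rightarrow> nat" where
  "dc_next us Q A D v =
     (if v = us then 0
      else Q v - (if Q v > 0 then 1 else 0) + (if A v then 1 else 0)
           + card {u. u \<noteq> us \<and> Q u > 0 \<and> D u = v})"

definition dc_step :: "('v::finite \<Rightarrow> 'v \<Rightarrow> real) \<Rightarrow> 'v \<Rightarrow> 'v set \<Rightarrow> ('v \<Rightarrow> real) \<Rightarrow> real
                      \<Rightarrow> ('v \<Rightarrow> nat) \<Rightarrow> ('v \<Rightarrow> nat) pmf" where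
  "dc_step w us Vs J \<beta> Q =
     do {
       A \<leftarrow> Pi_pmf UNIV False (\<lambda>v. if v \<in> Vs then bernoulli_pmf (\<beta> * J v) else return_pmf False);
       D \<leftarrow> Pi_pmf UNIV us (\<lambda>u. nbr_pmf w u);
       return_pmf (dc_next us Q A D)
     }"

definition dc_dist :: "('v::finite \<Rightarrow> 'v \<Rightarrow> real) \<Rightarrow> 'v \<Rightarrow> 'v set \<Rightarrow> ('v \<Rightarrow> real) \<Rightarrow> real
                      \<Rightarrow> nat \<Rightarrow> ('v \<Rightarrow> nat) \<Rightarrow> ('v \<Rightarrow> nat) pmf" where
  "dc_dist w us Vs J \<beta> t s = ((\<lambda>p. bind_pmf p (dc_step w us Vs J \<beta>)) ^^ t) (return_pmf s)"

definition stationary :: "(('v \<Rightarrow> nat) \<Rightarrow> ('v \<Rightarrow> nat) pmf) \<Rightarrow> ('v \<Rightarrow> nat) pmf \<Rightarrow> bool" where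
  "stationary K \<pi> \<longleftrightarrow> bind_pmf \<pi> K = \<pi>"

definition dc_ergodic :: "('v::finite \<Rightarrow> 'v \<Rightarrow> real) \<Rightarrow> 'v \<Rightarrow> 'v set \<Rightarrow> ('v \<Rightarrow> real) \<Rightarrow> real
                      \<Rightarrow> ('v \<Rightarrow> nat) pmf \<Rightarrow> bool" where
  "dc_ergodic w us Vs J \<beta> \<pi> \<longleftrightarrow>
     stationary (dc_step w us Vs J \<beta>) \<pi> \<and> set_pmf \<pi> \<subseteq> dc_states us \<and>
     (\<forall>s\<in>dc_states us. \<forall>x. (\<lambda>t. pmf (dc_dist w us Vs J \<beta> t s) x) \<longlonglongrightarrow> pmf \<pi> x)"

definition occupancy :: "'v \<Rightarrow> ('v \<Rightarrow> nat) pmf \<Rightarrow> 'v \<Rightarrow> real" where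
  "occupancy us \<pi> u = (if u = us then 0 else measure_pmf.prob \<pi> {Q. Q u > 0})"

end

theory Submission
  imports Defs
begin

text \<open>For a vertex \<open>v\<close> other than the sink, the expected one-step change of \<open>Q(v)\<close> given the
current state is \<open>-[Q(v) > 0] + \<beta>J\<^sub>v + \<Sum>\<^sub>u [Q(u) > 0] P(u,v)\<close>, summing over non-sink \<open>u\<close>: queue \<open>v\<close> sends at most one packet,
receives a Bernoulli(\<open>\<beta>J\<^sub>v\<close>) arrival, and every nonempty queue \<open>u\<close> forwards a packet to \<open>v\<close>
with probability \<open>P(u,v)\<close>. Under the stationary law \<open>E[Q(v)]\<close> is finite and invariant, so this
drift has mean zero, which is the \<open>v\<close>-th coordinate of \<open>\<eta>\<^sup>T(I - P) = \<beta>J\<^sup>T\<close>. Since \<open>P\<close> is stochastic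
and \<open>\<eta>\<close> vanishes at the sink, the coordinates of \<open>\<eta>\<^sup>T(I - P)\<close> sum to zero, as do those of \<open>J\<close>;
this gives the sink coordinate. Finally \<open>D\<^sup>-\<^sup>1L = I - P\<close>.\<close>

lemma expectation_Pi_pmf_component:
  fixes f :: "'b \<Rightarrow> real"
  assumes "finite A" and "i \<in> A"
  shows "measure_pmf.expectation (Pi_pmf A d p) (\<lambda>x. f (x i)) = measure_pmf.expectation (p i) f"
proof -
  have "measure_pmf.expectation (Pi_pmf A d p) (\<lambda>x. f (x i))
      = measure_pmf.expectation (map_pmf (\<lambda>x. x i) (Pi_pmf A d p)) f"
    by simp
  with assms show ?thesis by (simp add: Pi_pmf_component)
qed

lemma expectation_bind_pmf_nonneg:
  fixes f :: "'b \<Rightarrow> real"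
  assumes nonneg: "\<And>y. 0 \<le> f y" and int: "integrable (bind_pmf p K) f"
    and int_K: "\<And>x. integrable (K x) f"
  shows "measure_pmf.expectation p (\<lambda>x. measure_pmf.expectation (K x) f)
       = measure_pmf.expectation (bind_pmf p K) f"
proof -
  have "(\<integral>\<^sup>+x. measure_pmf.expectation (K x) f \<partial>p) = (\<integral>\<^sup>+x. \<integral>\<^sup>+y. f y \<partial>K x \<partial>p)"
    by (intro nn_integral_cong nn_integral_eq_integral[symmetric]) (auto simp: int_K nonneg)
  also have "\<dots> = (\<integral>\<^sup>+y. f y \<partial>bind_pmf p K)"
    by (rule nn_integral_bind_pmf[symmetric])
  also have "\<dots> = measure_pmf.expectation (bind_pmf p K) f"
    by (rule nn_integral_eq_integral) (use int nonneg in auto)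
  finally show ?thesis
    using nonneg by (subst (asm) nn_integral_eq_integrable) (auto intro: integral_nonneg_AE)
qed

lemma expectation_pair_pmf_fst:
  fixes f :: "'a \<Rightarrow> real"
  shows "measure_pmf.expectation (pair_pmf p q) (\<lambda>x. f (fst x)) = measure_pmf.expectation p f"
proof -
  have "measure_pmf.expectation (pair_pmf p q) (\<lambda>x. f (fst x))
      = measure_pmf.expectation (map_pmf fst (pair_pmf p q)) f"
    by simp
  then show ?thesis by (simp only: map_fst_pair_pmf)
qed

lemma expectation_pair_pmf_snd:
  fixes f :: "'b \<Rightarrow> real"
  shows "measure_pmf.expectation (pair_pmf p q) (\<lambda>x. f (snd x)) = measure_pmf.expectation q f"
proof -
  have "measure_pmf.expectation (pair_pmf p q) (\<lambda>x. f (snd x))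
      = measure_pmf.expectation (map_pmf snd (pair_pmf p q)) f"
    by simp
  then show ?thesis by (simp only: map_snd_pair_pmf)
qed

lemma gdeg_pos_if_connected:
  assumes nonneg: "\<And>u v. 0 \<le> w u v" and "connected_graph w" and "u \<noteq> (x::'v::finite)"
  shows "0 < gdeg w u"
proof -
  have "(u, x) \<in> (edges w)\<^sup>*"
    using \<open>connected_graph w\<close> by (simp add: connected_graph_def)
  then obtain y where "(u, y) \<in> edges w"
    using \<open>u \<noteq> x\<close> by (metis converse_rtranclE)
  then show ?thesis
    unfolding gdeg_def edges_def using nonneg by (intro sum_pos2[where i=y]) auto
qed

lemma sum_trans_mat_row: "gdeg w u \<noteq> 0 \<Longrightarrow> (\<Sum>v\<in>UNIV. trans_mat w u v) = 1"
  by (simp add: trans_mat_def gdeg_def flip: sum_divide_distrib)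

lemma div_gdeg_mult_laplacian:
  "gdeg w u \<noteq> 0 \<Longrightarrow> x / gdeg w u * laplacian w u v = x * ((if u = v then 1 else 0) - trans_mat w u v)"
  by (cases "u = v") (simp_all add: laplacian_def trans_mat_def field_simps)

lemma sum_mult_identity_minus:
  fixes \<eta> :: "'v::finite \<Rightarrow> real"
  shows "(\<Sum>u\<in>UNIV. \<eta> u * ((if u = v then 1 else 0) - P u v)) = \<eta> v - (\<Sum>u\<in>UNIV. \<eta> u * P u v)"
proof -
  have "\<eta> u * ((if u = v then 1 else 0) - P u v) = (if u = v then \<eta> u else 0) - \<eta> u * P u v" for u
    by (simp add: right_diff_distrib)
  then show ?thesis
    by (simp add: sum_subtractf)
qed

lemma sum_residual_eq_0:
  fixes \<eta> :: "'v::finite \<Rightarrow> real"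
  assumes rows: "\<And>u. u \<noteq> s \<Longrightarrow> (\<Sum>v\<in>UNIV. P u v) = 1" and "\<eta> s = 0"
  shows "(\<Sum>v\<in>UNIV. \<Sum>u\<in>UNIV. \<eta> u * ((if u = v then 1 else 0) - P u v)) = 0"
proof -
  have row: "\<eta> u * (\<Sum>v\<in>UNIV. P u v) = \<eta> u" for u
    using rows[of u] \<open>\<eta> s = 0\<close> by (cases "u = s") auto
  show ?thesis
    by (simp add: row sum.swap[of _ UNIV UNIV] right_diff_distrib sum_subtractf sum_distrib_left[symmetric])
qed

lemma pmf_nbr_pmf:
  assumes nonneg: "\<And>u v. 0 \<le> w u v" and deg: "0 < gdeg w u"
  shows "pmf (nbr_pmf w u) v = trans_mat w u v"
proof -
  have "(\<Sum>x\<in>UNIV. w u x / gdeg w u) = 1"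
    using deg by (simp add: sum_divide_distrib[symmetric] gdeg_def)
  then have "(\<integral>\<^sup>+x. ennreal (w u x / gdeg w u) \<partial>count_space UNIV) = 1"
    using nonneg deg by (simp add: nn_integral_count_space_finite sum_ennreal)
  then show ?thesis
    unfolding nbr_pmf_def trans_mat_def using nonneg deg by (subst pmf_embed_pmf) auto
qed

lemma card_senders_eq_sum:
  fixes Q :: "'v::finite \<Rightarrow> nat"
  shows "real (card {u. u \<noteq> us \<and> 0 < Q u \<and> D u = v})
      = (\<Sum>u\<in>UNIV - {us}. indicator {Q. 0 < Q u} Q * indicator {v} (D u))"
  by (simp add: indicator_def sum.If_cases Int_def conj_ac)

lemma dc_step_expectation:
  fixes w :: "'v::finite \<Rightarrow> 'v \<Rightarrow> real"
  assumes nonneg: "\<And>u v. 0 \<le> w u v" and deg: "\<And>u. u \<noteq> us \<Longrightarrow> 0 < gdeg w u"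
    and bern: "\<And>v. v \<in> Vs \<Longrightarrow> 0 \<le> \<beta> * J v \<and> \<beta> * J v \<le> 1"
    and "v \<noteq> us"
  shows "measure_pmf.expectation (dc_step w us Vs J \<beta> Q) (\<lambda>Q'. real (Q' v))
       = real (Q v) - indicator {Q. 0 < Q v} Q + (if v \<in> Vs then \<beta> * J v else 0)
         + (\<Sum>u\<in>UNIV - {us}. indicator {Q. 0 < Q u} Q * trans_mat w u v)"
proof -
  define arrivals where
    "arrivals = Pi_pmf UNIV False (\<lambda>v. if v \<in> Vs then bernoulli_pmf (\<beta> * J v) else return_pmf False)"
  define targets where "targets = Pi_pmf UNIV us (nbr_pmf w)"
  let ?E = "\<lambda>f. measure_pmf.expectation (pair_pmf arrivals targets) (f :: _ \<Rightarrow> real)"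
  have step: "dc_step w us Vs J \<beta> Q
      = map_pmf (\<lambda>x. dc_next us Q (fst x) (snd x)) (pair_pmf arrivals targets)"
    by (simp add: dc_step_def pair_pmf_def map_bind_pmf arrivals_def targets_def)
  have next_v: "real (dc_next us Q A D v) = real (Q v) - indicator {Q. 0 < Q v} Q + of_bool (A v)
      + (\<Sum>u\<in>UNIV - {us}. indicator {Q. 0 < Q u} Q * indicator {v} (D u))" for A D
    using \<open>v \<noteq> us\<close> by (simp add: dc_next_def card_senders_eq_sum indicator_def of_nat_diff)
  have arrival: "?E (\<lambda>x. of_bool (fst x v)) = (if v \<in> Vs then \<beta> * J v else 0)"
  proof -
    have "?E (\<lambda>x. of_bool (fst x v)) = measure_pmf.expectation arrivals (\<lambda>A. of_bool (A v))"
      by (rule expectation_pair_pmf_fst)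
    also have "\<dots> = measure_pmf.expectation
        (if v \<in> Vs then bernoulli_pmf (\<beta> * J v) else return_pmf False) of_bool"
      unfolding arrivals_def by (rule expectation_Pi_pmf_component) auto
    finally show ?thesis
      using bern[of v] by (simp add: integral_measure_pmf_real[where A=UNIV] UNIV_bool)
  qed
  have transmission: "?E (\<lambda>x. indicator {v} (snd x u)) = trans_mat w u v" if "u \<noteq> us" for u
  proof -
    have "?E (\<lambda>x. indicator {v} (snd x u)) = measure_pmf.expectation targets (\<lambda>D. indicator {v} (D u))"
      by (rule expectation_pair_pmf_snd)
    also have "\<dots> = measure_pmf.expectation (nbr_pmf w u) (indicator {v})"
      unfolding targets_def by (rule expectation_Pi_pmf_component) auto
    finally show ?thesis
      using that by (simp add: measure_pmf_single pmf_nbr_pmf nonneg deg)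
  qed
  have "measure_pmf.expectation (dc_step w us Vs J \<beta> Q) (\<lambda>Q'. real (Q' v))
      = ?E (\<lambda>x. real (Q v) - indicator {Q. 0 < Q v} Q + of_bool (fst x v)
          + (\<Sum>u\<in>UNIV - {us}. indicator {Q. 0 < Q u} Q * indicator {v} (snd x u)))"
    by (simp only: step integral_map_pmf next_v)
  also have "\<dots> = real (Q v) - indicator {Q. 0 < Q v} Q + ?E (\<lambda>x. of_bool (fst x v))
      + (\<Sum>u\<in>UNIV - {us}. indicator {Q. 0 < Q u} Q * ?E (\<lambda>x. indicator {v} (snd x u)))"
    by (simp add: integrable_measure_pmf_finite integral_add integral_sum integral_mult_right_zero
        del: sum_indicator_mult sum_mult_indicator)
  finally show ?thesis
    by (simp add: arrival transmission)
qed

lemma sum_occupancy_mult: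
  fixes us :: "'v::finite"
  shows "(\<Sum>u\<in>UNIV. occupancy us \<pi> u * f u) = (\<Sum>u\<in>UNIV - {us}. measure_pmf.prob \<pi> {Q. 0 < Q u} * f u)"
  by (rule sum.mono_neutral_cong_right) (auto simp: occupancy_def)

lemma dc_occupancy_balance:
  fixes w :: "'v::finite \<Rightarrow> 'v \<Rightarrow> real"
  assumes nonneg: "\<And>u v. 0 \<le> w u v" and deg: "\<And>u. u \<noteq> us \<Longrightarrow> 0 < gdeg w u"
    and bern: "\<And>v. v \<in> Vs \<Longrightarrow> 0 \<le> \<beta> * J v \<and> \<beta> * J v \<le> 1"
    and stat: "stationary (dc_step w us Vs J \<beta>) \<pi>"
    and int: "integrable \<pi> (\<lambda>Q. real (Q v))" and "v \<noteq> us"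
  shows "occupancy us \<pi> v = (if v \<in> Vs then \<beta> * J v else 0) + (\<Sum>u\<in>UNIV. occupancy us \<pi> u * trans_mat w u v)"
proof -
  let ?drift = "\<lambda>Q. measure_pmf.expectation (dc_step w us Vs J \<beta> Q) (\<lambda>Q'. real (Q' v))"
  have indicator_int: "integrable \<pi> (\<lambda>Q. indicator {Q. 0 < Q u} Q :: real)" for u
    by (rule measure_pmf.integrable_const_bound[where B=1]) (auto simp: indicator_def)
  have drift: "?drift Q = real (Q v) - indicator {Q. 0 < Q v} Q + (if v \<in> Vs then \<beta> * J v else 0)
      + (\<Sum>u\<in>UNIV - {us}. indicator {Q. 0 < Q u} Q * trans_mat w u v)" for Q
    by (rule dc_step_expectation[OF nonneg deg bern \<open>v \<noteq> us\<close>])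
  have "measure_pmf.expectation \<pi> ?drift = measure_pmf.expectation \<pi> (\<lambda>Q. real (Q v))"
    using expectation_bind_pmf_nonneg[of "\<lambda>Q. real (Q v)" \<pi> "dc_step w us Vs J \<beta>"] stat int
    by (simp add: stationary_def integrable_measure_pmf_finite dc_step_def)
  moreover have "measure_pmf.expectation \<pi> ?drift
      = measure_pmf.expectation \<pi> (\<lambda>Q. real (Q v)) - measure_pmf.prob \<pi> {Q. 0 < Q v}
        + (if v \<in> Vs then \<beta> * J v else 0)
        + (\<Sum>u\<in>UNIV - {us}. measure_pmf.prob \<pi> {Q. 0 < Q u} * trans_mat w u v)"
    using int indicator_int
    by (simp add: drift integral_add integral_diff integral_sum integrable_sum integral_mult_left
        del: sum_indicator_mult)
  ultimately show ?thesis
    unfolding sum_occupancy_mult using \<open>v \<noteq> us\<close> by (simp add: occupancy_def)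
qed

lemma dc_occupancy_equation:
  fixes w :: "'v::finite \<Rightarrow> 'v \<Rightarrow> real"
  assumes nonneg: "\<And>u v. 0 \<le> w u v" and deg: "\<And>u. u \<noteq> us \<Longrightarrow> 0 < gdeg w u"
    and rate: "rate_vector us Vs J"
    and bern: "\<And>v. v \<in> Vs \<Longrightarrow> 0 \<le> \<beta> * J v \<and> \<beta> * J v \<le> 1"
    and stat: "stationary (dc_step w us Vs J \<beta>) \<pi>"
    and int: "\<And>u. u \<noteq> us \<Longrightarrow> integrable \<pi> (\<lambda>Q. real (Q u))"
  shows "(\<Sum>u\<in>UNIV. occupancy us \<pi> u * ((if u = v then 1 else 0) - trans_mat w u v)) = \<beta> * J v"
proof -
  define \<eta> where "\<eta> = occupancy us \<pi>"
  let ?residual = "\<lambda>v. \<Sum>u\<in>UNIV. \<eta> u * ((if u = v then 1 else 0) - trans_mat w u v)"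
  have \<eta>_sink: "\<eta> us = 0"
    by (simp add: \<eta>_def occupancy_def)
  have J_sink: "J us = - (\<Sum>v\<in>UNIV - {us}. J v)"
    and J_idle: "\<And>v. v \<notin> Vs \<Longrightarrow> v \<noteq> us \<Longrightarrow> J v = 0"
    using rate by (auto simp: rate_vector_def)
  have nonsink: "?residual v = \<beta> * J v" if "v \<noteq> us" for v
    using dc_occupancy_balance[OF nonneg deg bern stat int[OF that] that] that J_idle[of v]
    by (simp add: \<eta>_def sum_mult_identity_minus split: if_splits)
  have rows: "\<And>u. u \<noteq> us \<Longrightarrow> (\<Sum>v\<in>UNIV. trans_mat w u v) = 1"
    using deg sum_trans_mat_row by force
  have "?residual us = - (\<Sum>v\<in>UNIV - {us}. ?residual v)"
    using sum_residual_eq_0[where P = "trans_mat w" and s = us and \<eta> = \<eta>, OF rows \<eta>_sink]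
      sum.remove[of UNIV us ?residual]
    by simp
  then have "?residual us = \<beta> * J us"
    by (simp add: nonsink J_sink sum_distrib_left)
  with nonsink show ?thesis
    unfolding \<eta>_def by (cases "v = us") simp_all
qed

theorem mainTheorem2:
  fixes w :: "'v::finite \<Rightarrow> 'v \<Rightarrow> real" and us :: 'v and Vs :: "'v set"
    and J :: "'v \<Rightarrow> real" and \<beta> :: real and \<pi> :: "('v \<Rightarrow> nat) pmf"
  assumes "weighted_graph w" and "connected_graph w"
    and "rate_vector us Vs J"
    and "\<beta> > 0" and "\<forall>v\<in>Vs. \<beta> * J v \<le> 1"
    and "dc_ergodic w us Vs J \<beta> \<pi>"
    and "\<forall>u. u \<noteq> us \<longrightarrow> integrable (measure_pmf \<pi>) (\<lambda>Q. real (Q u))"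
  shows "(\<forall>v. (\<Sum>u\<in>UNIV. occupancy us \<pi> u * ((if u = v then 1 else 0) - trans_mat w u v)) = \<beta> * J v)
       \<and> (\<forall>v. (\<Sum>u\<in>UNIV. (occupancy us \<pi> u / gdeg w u) * laplacian w u v) = \<beta> * J v)"
proof -
  have nonneg: "\<And>u v. 0 \<le> w u v"
    using \<open>weighted_graph w\<close> by (simp add: weighted_graph_def)
  have deg: "\<And>u. u \<noteq> us \<Longrightarrow> 0 < gdeg w u"
    using gdeg_pos_if_connected[OF nonneg \<open>connected_graph w\<close>] by blast
  have bern: "\<And>v. v \<in> Vs \<Longrightarrow> 0 \<le> \<beta> * J v \<and> \<beta> * J v \<le> 1"
    using assms(3-5) by (auto simp: rate_vector_def intro: less_imp_le)
  have stat: "stationary (dc_step w us Vs J \<beta>) \<pi>"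
    using \<open>dc_ergodic w us Vs J \<beta> \<pi>\<close> by (simp add: dc_ergodic_def)
  have residual: "(\<Sum>u\<in>UNIV. occupancy us \<pi> u * ((if u = v then 1 else 0) - trans_mat w u v)) = \<beta> * J v" for v
    using dc_occupancy_equation[OF nonneg deg \<open>rate_vector us Vs J\<close> bern stat] assms(7) by blast
  have "occupancy us \<pi> u / gdeg w u * laplacian w u v
      = occupancy us \<pi> u * ((if u = v then 1 else 0) - trans_mat w u v)" for u v
    using div_gdeg_mult_laplacian[of w u "occupancy us \<pi> u" v] deg[of u]
    by (cases "u = us") (simp_all add: occupancy_def)
  with residual show ?thesis
    by simp
qed

end
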